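(* Assume the standing assumption (S), and suppose $|\eta(x)|\le U<\infty$ for all $x\in I$. Then there exists $A\in\mathbb R_+$ such that $a_N(y)\le\frac{A}{\sqrt N}$ for all $N\ge N_0$ and all $y\in I$.
   Context: Let $-\infty\le l<r\le\infty$, $I=(l,r)$, $\eta\colon\mathbb R\to\mathbb R$ Borel with $\eta\ne0$ on $I$, $1/\eta^2\in L^1_{\mathrm{loc}}(I)$, $\eta=0$ off $I$, $m\in I$. $q(y,x)=\int_y^x\int_y^u\frac{2}{\eta^2(z)}dz\,du\in[0,\infty]$; $q(l+)=\lim_{x\searrow l}q(m,x)$, $q(r-)=\lim_{x\nearrow r}q(m,x)$. $\mu\ne\delta_0$ is a centered probability measure with finite first moment, $G_y(a)=\int q(y,y+ax)\mu(dx)$ for $y\in I$, $a\ge0$. Standing assumption (S): one of the following holds. (S1) $l=-\infty$, $r=\infty$, and there is $y_0\in I$ with $G_{y_0}(a)<\infty$ for all $a>0$. (S2) $l>-\infty$, $r=\infty$, $\inf\operatorname{supp}\mu>-\infty$, there is $y_0\in I$ with $\int_{\mathbb R_+}q(y_0,y_0+ax)\mu(dx)<\infty$ for all $a>0$; if $q(l+)<\infty$ then $\mu(\{\inf\operatorname{supp}\mu\})>0$; if $q(l+)=\infty$ then $\liminf_{y\to\infty}G_y(\bar a(y))>0$ and $\liminf_{y\searrow l}G_y(\bar a(y))>0$, where $\bar a(y)=\frac{l-y}{\inf\operatorname{supp}\mu}$. (S3) the mirror image of (S2): $l=-\infty$, $r<\infty$, $\sup\operatorname{supp}\mu<\infty$,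 there is $y_0\in I$ with $\int_{(-\infty,0]}q(y_0,y_0+ax)\mu(dx)<\infty$ for all $a>0$; if $q(r-)<\infty$ then $\mu(\{\sup\operatorname{supp}\mu\})>0$; if $q(r-)=\infty$ then $\liminf_{y\to-\infty}G_y(\bar a(y))>0$ and $\liminf_{y\nearrow r}G_y(\bar a(y))>0$, where $\bar a(y)=\frac{r-y}{\sup\operatorname{supp}\mu}$. (S4) $-\infty<l<r<\infty$, $\mu$ has bounded support; with $\bar a(y)=\frac{l-y}{\inf\operatorname{supp}\mu}\wedge\frac{r-y}{\sup\operatorname{supp}\mu}$: if $q(l+)<\infty$ then $\mu(\{\inf\operatorname{supp}\mu\})>0$; if $q(l+)=\infty$ then $\liminf_{y\searrow l}G_y(\bar a(y))>0$; if $q(r-)<\infty$ then $\mu(\{\sup\operatorname{supp}\mu\})>0$; if $q(r-)=\infty$ then $\liminf_{y\nearrow r}G_y(\bar a(y))>0$. Under (S) there is $N_0\in\mathbb N$ and, for $N\ge N_0$, the scale factor $a_N(y)=\sup\{a\ge0:G_y(a)\le\frac1N\}$ for $y\in I$ and $a_N=0$ at finite endpoints of $I$. *)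

theory Defs
  imports "HOL-Probability.Probability"
begin

definition Ival :: "ereal \<Rightarrow> ereal \<Rightarrow> real set" where
  "Ival l r = {x. l < ereal x \<and> ereal x < r}"

text \<open>Integrand 2/eta^2, with value infinity where eta vanishes (i.e. off I).\<close>
definition inv_eta2 :: "(real \<Rightarrow> real) \<Rightarrow> real \<Rightarrow> ennreal" where
  "inv_eta2 \<eta> z = (if \<eta> z = 0 then \<infinity> else ennreal (2 / (\<eta> z)\<^sup>2))"

text \<open>q(y,x) = int_y^x int_y^u 2/eta^2(z) dz du in [0,infinity]; for x < y the two
  orientation signs cancel, so this is the integral over u between y and x of the
  integral over z between y and u.\<close>
definition qfun :: "(real \<Rightarrow> real) \<Rightarrow> real \<Rightarrow> real \<Rightarrow> ennreal" where
  "qfun \<eta> y x = (\<integral>\<^sup>+ u \<in> {min y x..max y x}.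
      (\<integral>\<^sup>+ z \<in> {min y u..max y u}. inv_eta2 \<eta> z \<partial>lborel) \<partial>lborel)"

definition q_lplus :: "(real \<Rightarrow> real) \<Rightarrow> real \<Rightarrow> real \<Rightarrow> ennreal" where
  "q_lplus \<eta> m l = Lim (at_right l) (\<lambda>x. qfun \<eta> m x)"

definition q_rminus :: "(real \<Rightarrow> real) \<Rightarrow> real \<Rightarrow> real \<Rightarrow> ennreal" where
  "q_rminus \<eta> m r = Lim (at_left r) (\<lambda>x. qfun \<eta> m x)"

definition Gfun :: "(real \<Rightarrow> real) \<Rightarrow> real measure \<Rightarrow> real \<Rightarrow> real \<Rightarrow> ennreal" where
  "Gfun \<eta> \<mu> y a = (\<integral>\<^sup>+ x. qfun \<eta> y (y + a * x) \<partial>\<mu>)"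

definition aN :: "(real \<Rightarrow> real) \<Rightarrow> real measure \<Rightarrow> nat \<Rightarrow> real \<Rightarrow> real" where
  "aN \<eta> \<mu> N y = Sup {a. a \<ge> 0 \<and> Gfun \<eta> \<mu> y a \<le> ennreal (1 / real N)}"

definition msupp :: "real measure \<Rightarrow> real set" where
  "msupp \<mu> = {x. \<forall>e>0. emeasure \<mu> (ball x e) > 0}"

definition S1 :: "(real \<Rightarrow> real) \<Rightarrow> real measure \<Rightarrow> ereal \<Rightarrow> ereal \<Rightarrow> bool" where
  "S1 \<eta> \<mu> l r \<longleftrightarrow> l = -\<infinity> \<and> r = \<infinity> \<and>
     (\<exists>y0\<in>Ival l r. \<forall>a>0. Gfun \<eta> \<mu> y0 a < \<infinity>)"

definition S2 :: "(real \<Rightarrow> real) \<Rightarrow> real measure \<Rightarrow> ereal \<Rightarrow> ereal \<Rightarrow> real \<Rightarrow> bool" where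
  "S2 \<eta> \<mu> l r m \<longleftrightarrow> l \<noteq> -\<infinity> \<and> r = \<infinity> \<and> bdd_below (msupp \<mu>) \<and>
     (\<exists>y0\<in>Ival l r. \<forall>a>0.
        (\<integral>\<^sup>+ x \<in> {0..}. qfun \<eta> y0 (y0 + a * x) \<partial>\<mu>) < \<infinity>) \<and>
     (let L = real_of_ereal l; s = Inf (msupp \<mu>); abar = (\<lambda>y. (L - y) / s) in
       (q_lplus \<eta> m L < \<infinity> \<longrightarrow> emeasure \<mu> {s} > 0) \<and>
       (q_lplus \<eta> m L = \<infinity> \<longrightarrow>
          Liminf at_top (\<lambda>y. Gfun \<eta> \<mu> y (abar y)) > 0 \<and>
          Liminf (at_right L) (\<lambda>y. Gfun \<eta> \<mu> y (abar y)) > 0))"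

definition S3 :: "(real \<Rightarrow> real) \<Rightarrow> real measure \<Rightarrow> ereal \<Rightarrow> ereal \<Rightarrow> real \<Rightarrow> bool" where
  "S3 \<eta> \<mu> l r m \<longleftrightarrow> l = -\<infinity> \<and> r \<noteq> \<infinity> \<and> bdd_above (msupp \<mu>) \<and>
     (\<exists>y0\<in>Ival l r. \<forall>a>0.
        (\<integral>\<^sup>+ x \<in> {..0}. qfun \<eta> y0 (y0 + a * x) \<partial>\<mu>) < \<infinity>) \<and>
     (let R = real_of_ereal r; s = Sup (msupp \<mu>); abar = (\<lambda>y. (R - y) / s) in
       (q_rminus \<eta> m R < \<infinity> \<longrightarrow> emeasure \<mu> {s} > 0) \<and>
       (q_rminus \<eta> m R = \<infinity> \<longrightarrow>
          Liminf at_bot (\<lambda>y. Gfun \<eta> \<mu> y (abar y)) > 0 \<and>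
          Liminf (at_left R) (\<lambda>y. Gfun \<eta> \<mu> y (abar y)) > 0))"

definition S4 :: "(real \<Rightarrow> real) \<Rightarrow> real measure \<Rightarrow> ereal \<Rightarrow> ereal \<Rightarrow> real \<Rightarrow> bool" where
  "S4 \<eta> \<mu> l r m \<longleftrightarrow> l \<noteq> -\<infinity> \<and> r \<noteq> \<infinity> \<and> bounded (msupp \<mu>) \<and>
     (let L = real_of_ereal l; R = real_of_ereal r;
          si = Inf (msupp \<mu>); ss = Sup (msupp \<mu>);
          abar = (\<lambda>y. min ((L - y) / si) ((R - y) / ss)) in
       (q_lplus \<eta> m L < \<infinity> \<longrightarrow> emeasure \<mu> {si} > 0) \<and>
       (q_lplus \<eta> m L = \<infinity> \<longrightarrow> Liminf (at_right L) (\<lambda>y. Gfun \<eta> \<mu> y (abar y)) > 0) \<and>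
       (q_rminus \<eta> m R < \<infinity> \<longrightarrow> emeasure \<mu> {ss} > 0) \<and>
       (q_rminus \<eta> m R = \<infinity> \<longrightarrow> Liminf (at_left R) (\<lambda>y. Gfun \<eta> \<mu> y (abar y)) > 0))"

definition standing_S :: "(real \<Rightarrow> real) \<Rightarrow> real measure \<Rightarrow> ereal \<Rightarrow> ereal \<Rightarrow> real \<Rightarrow> bool" where
  "standing_S \<eta> \<mu> l r m \<longleftrightarrow> S1 \<eta> \<mu> l r \<or> S2 \<eta> \<mu> l r m \<or> S3 \<eta> \<mu> l r m \<or> S4 \<eta> \<mu> l r m"

end

theory Submission
  imports Defs
begin

(* A bound |eta| <= U turns the speed measure density 2/eta^2 into
   something at least 2/U^2 everywhere (off I it is infinite anyway).  Integrating twice,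
   the scale function grows at least quadratically: q(y,x) >= (x - y)^2 / (2 U^2).
   Since mu is not the Dirac mass at 0, it charges {|x| >= e} with some mass p > 0 for a
   suitable e > 0, so G_y(a) >= c a^2 with c = e^2 p / (2 U^2), uniformly in y.  Finally,
   any a with G_y(a) <= 1/N then satisfies a <= 1/sqrt(c N), which bounds the supremum
   a_N(y). *)

lemma inv_eta2_lower_bound:
  assumes U: "U > 0" and bdd: "\<And>z. \<eta> z \<noteq> 0 \<Longrightarrow> \<bar>\<eta> z\<bar> \<le> U"
  shows "inv_eta2 \<eta> z \<ge> ennreal (2 / U\<^sup>2)"
proof (cases "\<eta> z = 0")
  case False
  have "(\<eta> z)\<^sup>2 \<le> U\<^sup>2"
    using bdd[OF False] by (metis abs_ge_zero abs_le_square_iff abs_of_pos U)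
  moreover have "(\<eta> z)\<^sup>2 > 0" using False by auto
  ultimately have "2 / U\<^sup>2 \<le> 2 / (\<eta> z)\<^sup>2"
    using U by (intro divide_left_mono) (auto intro: mult_pos_pos)
  then show ?thesis using False by (simp add: inv_eta2_def ennreal_leI)
qed (simp add: inv_eta2_def)

lemma inner_integral_lower_bound:
  assumes inv: "\<And>z. inv_eta2 \<eta> z \<ge> ennreal c" and c: "c \<ge> 0"
  shows "(\<integral>\<^sup>+ z \<in> {min y u..max y u}. inv_eta2 \<eta> z \<partial>lborel) \<ge> ennreal (c * \<bar>u - y\<bar>)"
proof -
  have "ennreal (c * \<bar>u - y\<bar>) = ennreal c * ennreal (max y u - min y u)"
    using c by (subst ennreal_mult[symmetric]) (auto simp: max_def min_def)
  also have "\<dots> = (\<integral>\<^sup>+ z. ennreal c * indicator {min y u..max y u} z \<partial>lborel)"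
    by (subst nn_integral_cmult_indicator) auto
  also have "\<dots> \<le> (\<integral>\<^sup>+ z \<in> {min y u..max y u}. inv_eta2 \<eta> z \<partial>lborel)"
    by (intro nn_integral_mono) (auto simp: inv mult_right_mono indicator_def)
  finally show ?thesis .
qed

lemma far_half_interval:
  fixes x y :: real
  defines "d \<equiv> \<bar>x - y\<bar>"
  obtains S where "S \<in> sets lborel" "S \<subseteq> {min y x..max y x}"
    "emeasure lborel S = ennreal (d / 2)" "\<And>u. u \<in> S \<Longrightarrow> \<bar>u - y\<bar> \<ge> d / 2"
proof (cases "y \<le> x")
  case True
  then have d: "d = x - y" by (simp add: d_def)
  then have "y + d/2 \<le> x" "x - (y + d/2) = d/2" using True by (simp_all add: field_simps)
  with d show ?thesis
    by (intro that[of "{y + d/2..x}"]) (auto simp: emeasure_lborel_Icc)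
next
  case False
  then have d: "d = y - x" by (simp add: d_def)
  then have "x \<le> y - d/2" "(y - d/2) - x = d/2" using False by (simp_all add: field_simps)
  with d show ?thesis
    by (intro that[of "{x..y - d/2}"]) (auto simp: emeasure_lborel_Icc)
qed

(* Quadratic growth of the scale function: integrating the linear bound of the inner
   integral over the far half of [y,x] gives q(y,x) >= (x - y)^2 / (2 U^2). *)
lemma qfun_quadratic_lower_bound:
  assumes U: "U > 0" and inv: "\<And>z. inv_eta2 \<eta> z \<ge> ennreal (2 / U\<^sup>2)"
  shows "qfun \<eta> y x \<ge> ennreal ((x - y)\<^sup>2 / (2 * U\<^sup>2))"
proof -
  define d where "d = \<bar>x - y\<bar>"
  obtain S where S_sets: "S \<in> sets lborel" and S_sub: "S \<subseteq> {min y x..max y x}"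
    and S_meas: "emeasure lborel S = ennreal (d / 2)"
    and S_far: "\<And>u. u \<in> S \<Longrightarrow> \<bar>u - y\<bar> \<ge> d / 2"
    using far_half_interval[where x = x and y = y, folded d_def] by metis
  have "ennreal ((x - y)\<^sup>2 / (2 * U\<^sup>2)) = ennreal (d / U\<^sup>2) * ennreal (d / 2)"
    using U by (subst ennreal_mult[symmetric]) (auto simp: d_def power2_eq_square field_simps)
  also have "\<dots> = (\<integral>\<^sup>+ u. ennreal (d / U\<^sup>2) * indicator S u \<partial>lborel)"
    using S_sets by (simp add: nn_integral_cmult_indicator S_meas)
  also have "\<dots> \<le> qfun \<eta> y x"
    unfolding qfun_def
  proof (intro nn_integral_mono)
    fix u
    show "ennreal (d / U\<^sup>2) * indicator S u \<le>
       (\<integral>\<^sup>+ z \<in> {min y u..max y u}. inv_eta2 \<eta> z \<partial>lborel) * indicator {min y x..max y x} u"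
    proof (cases "u \<in> S")
      case True
      have "ennreal (d / U\<^sup>2) \<le> ennreal (2 / U\<^sup>2 * \<bar>u - y\<bar>)"
        using S_far[OF True] U by (intro ennreal_leI) (auto simp: field_simps)
      also have "\<dots> \<le> (\<integral>\<^sup>+ z \<in> {min y u..max y u}. inv_eta2 \<eta> z \<partial>lborel)"
        by (rule inner_integral_lower_bound[OF inv]) simp
      finally show ?thesis using True S_sub by auto
    qed auto
  qed
  finally show ?thesis .
qed

(* A Borel probability measure on the reals other than the Dirac mass at 0 puts
   positive mass on {|x| >= e} for some e > 0; otherwise it would live on {0}. *)
lemma mass_away_from_zero:
  assumes P: "prob_space \<mu>" and mu_sets: "sets \<mu> = sets borel"
    and nondeg: "\<mu> \<noteq> return borel (0::real)"
  obtains e where "e > 0" "measure \<mu> {x. e \<le> \<bar>x\<bar>} > 0"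
proof (rule ccontr)
  interpret P: prob_space \<mu> by (rule P)
  assume no_mass: "\<not> thesis"
  have null: "{x. 1 / Suc n \<le> \<bar>x\<bar>} \<in> null_sets \<mu>" for n :: nat
  proof -
    have "{x. 1 / Suc n \<le> \<bar>x\<bar>} \<in> sets \<mu>" unfolding mu_sets by measurable
    moreover have "measure \<mu> {x. 1 / Suc n \<le> \<bar>x\<bar>} = 0"
      using that no_mass measure_nonneg[of \<mu>] by (metis less_eq_real_def of_nat_0_less_iff
          zero_less_Suc zero_less_divide_1_iff)
    ultimately show ?thesis by (auto simp: null_sets_def P.emeasure_eq_measure)
  qed
  have "{x \<in> space \<mu>. x \<noteq> 0} \<subseteq> (\<Union>n::nat. {x. 1 / Suc n \<le> \<bar>x\<bar>})"
  proof
    fix x assume "x \<in> {x \<in> space \<mu>. x \<noteq> 0}"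
    then have "\<bar>x\<bar> > 0" by simp
    then obtain n :: nat where "1 / Suc n < \<bar>x\<bar>" by (meson nat_approx_posE)
    then show "x \<in> (\<Union>n::nat. {x. 1 / Suc n \<le> \<bar>x\<bar>})" by (auto intro: less_imp_le)
  qed
  then have AE_zero: "AE x in \<mu>. x = 0"
    using null by (intro AE_I'[of "\<Union>n. _"] null_sets_UN) auto
  have "\<mu> = return borel 0"
  proof (rule measure_eqI)
    show "sets \<mu> = sets (return borel 0)" using mu_sets by simp
    fix A assume A: "A \<in> sets \<mu>"
    have "emeasure \<mu> A = (\<integral>\<^sup>+ x. indicator A x \<partial>\<mu>)"
      using A by simp
    also have "\<dots> = (\<integral>\<^sup>+ x. indicator A (0::real) \<partial>\<mu>)"
      using AE_zero by (intro nn_integral_cong_AE) auto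
    also have "\<dots> = emeasure (return borel 0) A"
      using A mu_sets by (simp add: P.emeasure_space_1 emeasure_return)
    finally show "emeasure \<mu> A = emeasure (return borel 0) A" .
  qed
  then show False using nondeg by simp
qed

lemma Gfun_quadratic_lower_bound:
  assumes U: "U > 0" and inv: "\<And>z. inv_eta2 \<eta> z \<ge> ennreal (2 / U\<^sup>2)"
    and P: "prob_space \<mu>" and mu_sets: "sets \<mu> = sets borel" and e: "e > 0"
  shows "Gfun \<eta> \<mu> y a \<ge> ennreal (a\<^sup>2 * e\<^sup>2 * measure \<mu> {x. e \<le> \<bar>x\<bar>} / (2 * U\<^sup>2))"
proof -
  interpret P: prob_space \<mu> by (rule P)
  define E where "E = {x::real. e \<le> \<bar>x\<bar>}"
  define c where "c = a\<^sup>2 * e\<^sup>2 / (2 * U\<^sup>2)"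
  have E_sets: "E \<in> sets \<mu>" unfolding mu_sets E_def by measurable
  have "ennreal (a\<^sup>2 * e\<^sup>2 * measure \<mu> E / (2 * U\<^sup>2)) = ennreal c * emeasure \<mu> E"
    using U by (simp add: c_def P.emeasure_eq_measure ennreal_mult[symmetric])
  also have "\<dots> = (\<integral>\<^sup>+ x. ennreal c * indicator E x \<partial>\<mu>)"
    using E_sets by (simp add: nn_integral_cmult_indicator)
  also have "\<dots> \<le> Gfun \<eta> \<mu> y a"
    unfolding Gfun_def
  proof (intro nn_integral_mono)
    fix x
    show "ennreal c * indicator E x \<le> qfun \<eta> y (y + a * x)"
    proof (cases "x \<in> E")
      case True
      have "e\<^sup>2 \<le> x\<^sup>2" using True e by (metis E_def abs_le_square_iff abs_of_pos mem_Collect_eq)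
      then have "a\<^sup>2 * e\<^sup>2 \<le> a\<^sup>2 * x\<^sup>2" by (intro mult_left_mono) auto
      then have "c \<le> (y + a * x - y)\<^sup>2 / (2 * U\<^sup>2)"
        unfolding c_def using U by (intro divide_right_mono) (auto simp: power_mult_distrib)
      then have "ennreal c \<le> ennreal ((y + a * x - y)\<^sup>2 / (2 * U\<^sup>2))" by (rule ennreal_leI)
      also have "\<dots> \<le> qfun \<eta> y (y + a * x)" by (rule qfun_quadratic_lower_bound[OF U inv])
      finally show ?thesis using True by simp
    qed simp
  qed
  finally show ?thesis unfolding E_def .
qed

(* G_y(0) = 0, since q(y,y) is an integral over the single point y. *)
lemma Gfun_zero: "Gfun \<eta> \<mu> y 0 = 0"
proof -
  have "{y..y} \<in> null_sets lborel" by (simp add: null_sets_def)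
  then show ?thesis unfolding Gfun_def qfun_def by (simp add: nn_integral_null_set)
qed

lemma aN_le_of_quadratic_growth:
  assumes c: "c > 0" and N: "N > 0"
    and growth: "\<And>a. Gfun \<eta> \<mu> y a \<ge> ennreal (c * a\<^sup>2)"
  shows "aN \<eta> \<mu> N y \<le> sqrt (1 / c) / sqrt (real N)"
  unfolding aN_def
proof (rule cSup_least)
  show "{a. a \<ge> 0 \<and> Gfun \<eta> \<mu> y a \<le> ennreal (1 / real N)} \<noteq> {}"
    using Gfun_zero by auto
  fix a assume "a \<in> {a. a \<ge> 0 \<and> Gfun \<eta> \<mu> y a \<le> ennreal (1 / real N)}"
  then have "ennreal (c * a\<^sup>2) \<le> ennreal (1 / real N)"
    using growth order.trans by blast
  then have "c * a\<^sup>2 \<le> 1 / real N" using N by (subst (asm) ennreal_le_iff) auto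
  then have "a\<^sup>2 \<le> 1 / c / real N" using c N by (simp add: field_simps)
  then have "a \<le> sqrt (1 / c / real N)" by (rule real_le_rsqrt)
  then show "a \<le> sqrt (1 / c) / sqrt (real N)" by (simp add: real_sqrt_divide real_sqrt_mult)
qed

theorem mainTheorem12:
  fixes \<eta> :: "real \<Rightarrow> real" and \<mu> :: "real measure"
    and l r :: ereal and m U :: real and N0 :: nat
  assumes lr: "l < r"
    and eta_borel: "\<eta> \<in> borel_measurable borel"
    and eta_nz: "\<forall>x\<in>Ival l r. \<eta> x \<noteq> 0"
    and eta_loc: "\<forall>K. compact K \<and> K \<subseteq> Ival l r \<longrightarrow>
                    set_integrable lborel K (\<lambda>z. 1 / (\<eta> z)\<^sup>2)"
    and eta_off: "\<forall>x. x \<notin> Ival l r \<longrightarrow> \<eta> x = 0"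
    and m_in: "m \<in> Ival l r"
    and mu_prob: "prob_space \<mu>" and mu_sets: "sets \<mu> = sets borel"
    and mu_int: "integrable \<mu> (\<lambda>x. x)"
    and mu_centered: "(\<integral>x. x \<partial>\<mu>) = 0"
    and mu_nondeg: "\<mu> \<noteq> return borel 0"
    and S: "standing_S \<eta> \<mu> l r m"
    and N0: "N0 \<ge> 1"
    and eta_bdd: "\<forall>x\<in>Ival l r. \<bar>\<eta> x\<bar> \<le> U"
  shows "\<exists>A\<ge>0. \<forall>N\<ge>N0. \<forall>y\<in>Ival l r. aN \<eta> \<mu> N y \<le> A / sqrt (real N)"
proof -
  have U: "U > 0" using eta_bdd eta_nz m_in by force
  have inv: "\<And>z. inv_eta2 \<eta> z \<ge> ennreal (2 / U\<^sup>2)"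
    using inv_eta2_lower_bound[OF U] eta_bdd eta_off by blast
  obtain e where e: "e > 0" and p: "measure \<mu> {x. e \<le> \<bar>x\<bar>} > 0"
    using mass_away_from_zero[OF mu_prob mu_sets mu_nondeg] by blast
  define c where "c = e\<^sup>2 * measure \<mu> {x. e \<le> \<bar>x\<bar>} / (2 * U\<^sup>2)"
  have c: "c > 0" using U e p by (simp add: c_def)
  have growth: "Gfun \<eta> \<mu> y a \<ge> ennreal (c * a\<^sup>2)" for y a
    using Gfun_quadratic_lower_bound[OF U inv mu_prob mu_sets e, where y = y and a = a]
    by (simp add: c_def mult.commute mult.left_commute)
  have "aN \<eta> \<mu> N y \<le> sqrt (1 / c) / sqrt (real N)" if "N \<ge> N0" for N y
    using aN_le_of_quadratic_growth[OF c _ growth] that N0 by simp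
  then show ?thesis using c by (intro exI[of _ "sqrt (1 / c)"]) auto
qed

end
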